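(* Let $Q_k^A,Q_k^B$ be the SDQ iterates, $Q_k^{\mathrm{err}}=Q_k^A-Q_k^B$, and $w_k^A,w_k^B$ the associated noise vectors (see context). Define \[ Q_{k+1}^{\mathrm{err}_L}=(I+\alpha\gamma DP\Pi_{Q_k^B}-\alpha D)Q_k^{\mathrm{err}_L}+\alpha w_k^A-\alpha w_k^B, \] with initial vector $Q_0^{\mathrm{err}_L}\in\mathbb{R}^{|\mathcal{S}||\mathcal{A}|}$. If $Q_0^{\mathrm{err}_L}\le Q_0^{\mathrm{err}}$ element-wise, then $Q_k^{\mathrm{err}_L}\le Q_k^{\mathrm{err}}$ element-wise for all $k\ge0$.
   Context: Finite MDP with states $\mathcal{S}=\{1,\dots,|\mathcal{S}|\}$, actions $\mathcal{A}=\{1,\dots,|\mathcal{A}|\}$, transitions $P(s'|s,a)$, bounded deterministic reward $r(s,a,s')$, discount $\gamma\in(0,1)$. Sampling distribution $d(s,a)>0$ on $\mathcal{S}\times\mathcal{A}$; at iteration $k$, $(s_k,a_k)\sim d$ i.i.d., $s_k'\sim P(\cdot|s_k,a_k)$, $r_{k+1}=r(s_k,a_k,s_k')$. Constant step-size $\alpha\in(0,1)$. SDQ: only entry $(s_k,a_k)$ is updated, $Q_{k+1}^A(s_k,a_k)=Q_k^A(s_k,a_k)+\alpha\{r_{k+1}+\gamma Q_k^A(s_k',\arg\max_aQ_k^B(s_k',a))-Q_k^A(s_k,a_k)\}$ and symmetrically for $B$ with roles of $A,B$ swapped. Vector notation: $Q\in\mathbb{R}^{|\mathcal{S}||\mathcal{A}|}$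 stacks $Q(\cdot,1),\dots,Q(\cdot,|\mathcal{A}|)$, so $Q(s,a)=(e_a\otimes e_s)^TQ$. $D$ is the diagonal matrix with entry $d(s,a)$ at position $(s,a)$. $P\in\mathbb{R}^{|\mathcal{S}||\mathcal{A}|\times|\mathcal{S}|}$ has row $(s,a)$ equal to $P(\cdot|s,a)$. $R(s,a)=\mathbb{E}[r(s,a,s')|s,a]$. For $Q$, $\pi_Q(s)=\arg\max_aQ(s,a)$ (fixed tie-breaking) and $\Pi_Q\in\mathbb{R}^{|\mathcal{S}|\times|\mathcal{S}||\mathcal{A}|}$ has $s$-th row $e_{\pi_Q(s)}^T\otimes e_s^T$. Noise: $w_k^A=(e_{a_k}\otimes e_{s_k})r_{k+1}+\gamma(e_{a_k}\otimes e_{s_k})e_{s_k'}^T\Pi_{Q_k^B}Q_k^A-(e_{a_k}\otimes e_{s_k})(e_{a_k}\otimes e_{s_k})^TQ_k^A-(DR+\gamma DP\Pi_{Q_k^B}Q_k^A-DQ_k^A)$, and $w_k^B$ is the same with $A$ and $B$ swapped. *)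

theory Defs
  imports "HOL-Analysis.Analysis"
begin

text \<open>Vectors Q in R^{|S||A|} are represented as real ^ ('s \<times> 'a): the entry
  at index (s,a) is Q(s,a); the canonical basis vector e_a \<otimes> e_s is axis (s,a) 1.
  Matrices are elements of real ^ cols ^ rows.\<close>

definition unitv :: "'i::finite \<Rightarrow> real ^ 'i" where
  "unitv i = axis i 1"

definition Dmat :: "('s::finite \<times> 'a::finite \<Rightarrow> real) \<Rightarrow> real ^ ('s \<times> 'a) ^ ('s \<times> 'a)" where
  "Dmat d = (\<chi> i j. if i = j then d i else 0)"

text \<open>Transition matrix P: row (s,a) is P(. | s,a).\<close>
definition Pmat :: "('s::finite \<Rightarrow> 'a::finite \<Rightarrow> 's \<Rightarrow> real) \<Rightarrow> real ^ 's ^ ('s \<times> 'a)" where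
  "Pmat P = (\<chi> i s'. P (fst i) (snd i) s')"

definition Rvec :: "('s::finite \<Rightarrow> 'a::finite \<Rightarrow> 's \<Rightarrow> real) \<Rightarrow> ('s \<Rightarrow> 'a \<Rightarrow> 's \<Rightarrow> real) \<Rightarrow> real ^ ('s \<times> 'a)" where
  "Rvec P r = (\<chi> i. \<Sum>s'\<in>UNIV. P (fst i) (snd i) s' * r (fst i) (snd i) s')"

text \<open>Greedy-policy matrix Pi_Q: row s is e_{pi_Q(s)}^T \<otimes> e_s^T, where
  greedy Q s is the (fixed tie-breaking) argmax of Q(s, .).\<close>
definition PiMat :: "(real ^ ('s \<times> 'a) \<Rightarrow> 's \<Rightarrow> 'a) \<Rightarrow> real ^ ('s::finite \<times> 'a::finite) \<Rightarrow> real ^ ('s \<times> 'a) ^ 's" where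
  "PiMat greedy Q = (\<chi> s. unitv (s, greedy Q s))"

definition sdq_update ::
  "(real ^ ('s \<times> 'a) \<Rightarrow> 's \<Rightarrow> 'a) \<Rightarrow> real \<Rightarrow> real \<Rightarrow> 's::finite \<times> 'a::finite \<Rightarrow> 's \<Rightarrow> real
   \<Rightarrow> real ^ ('s \<times> 'a) \<Rightarrow> real ^ ('s \<times> 'a) \<Rightarrow> real ^ ('s \<times> 'a)" where
  "sdq_update greedy \<alpha> \<gamma> sa s' rr QA QB =
     QA + (\<alpha> * (rr + \<gamma> * QA $ (s', greedy QB s') - QA $ sa)) *\<^sub>R unitv sa"

text \<open>Noise vector w^A (with roles: QA updated, QB selects); w^B is obtained by swapping.\<close>
definition sdq_noise ::
  "('s::finite \<times> 'a::finite \<Rightarrow> real) \<Rightarrow> ('s \<Rightarrow> 'a \<Rightarrow> 's \<Rightarrow> real) \<Rightarrow> ('s \<Rightarrow> 'a \<Rightarrow> 's \<Rightarrow> real)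
   \<Rightarrow> (real ^ ('s \<times> 'a) \<Rightarrow> 's \<Rightarrow> 'a) \<Rightarrow> real \<Rightarrow> 's \<times> 'a \<Rightarrow> 's \<Rightarrow> real
   \<Rightarrow> real ^ ('s \<times> 'a) \<Rightarrow> real ^ ('s \<times> 'a) \<Rightarrow> real ^ ('s \<times> 'a)" where
  "sdq_noise d P r greedy \<gamma> sa s' rr QA QB =
     rr *\<^sub>R unitv sa
     + (\<gamma> * (unitv s' \<bullet> (PiMat greedy QB *v QA))) *\<^sub>R unitv sa
     - (unitv sa \<bullet> QA) *\<^sub>R unitv sa
     - (Dmat d *v Rvec P r + \<gamma> *\<^sub>R ((Dmat d ** Pmat P ** PiMat greedy QB) *v QA) - Dmat d *v QA)"

end

theory Submission
  imports Defs
begin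

text \<open>Subtracting the comparison system from the difference of the two SDQ updates, the
  reward terms and the noise cancel, and the gap \<open>G\<^sub>k = Q\<^sub>k\<^sup>A - Q\<^sub>k\<^sup>B - Q\<^sub>k\<^sup>L\<close> obeys
  \<open>G\<^sub>k\<^sub>+\<^sub>1 = (I - \<alpha>D) G\<^sub>k + \<alpha>\<gamma> DP (\<Pi>\<^bsub>B\<^esub> Q\<^sup>A - \<Pi>\<^bsub>A\<^esub> Q\<^sup>B - \<Pi>\<^bsub>B\<^esub> Q\<^sup>L)\<close>.
  Since \<open>\<alpha> d \<le> 1\<close>, both \<open>I - \<alpha>D\<close> and \<open>DP\<close> are entrywise nonnegative, and because the greedy
  policy of \<open>Q\<^sup>B\<close> maximises \<open>Q\<^sup>B\<close>, \<open>\<Pi>\<^bsub>A\<^esub> Q\<^sup>B \<le> \<Pi>\<^bsub>B\<^esub> Q\<^sup>B\<close>; hence the last vector dominates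
  \<open>\<Pi>\<^bsub>B\<^esub> G\<^sub>k\<close>. So \<open>G\<^sub>k \<ge> 0\<close> propagates from \<open>k\<close> to \<open>k + 1\<close>.\<close>

lemma unitv_inner [simp]: "unitv j \<bullet> v = v $ j"
  by (simp add: unitv_def inner_axis')

lemma PiMat_mult_vec [simp]: "(PiMat g Q *v v) $ s = v $ (s, g Q s)"
  by (simp add: PiMat_def matrix_vector_mult_def unitv_def axis_def
      if_distrib[of "\<lambda>x. x * _"] cong: if_cong)

lemma nonneg_matrix_mult_vec_mono:
  fixes M :: "'a::{ordered_semiring, semiring_1} ^ 'n::finite ^ 'm::finite"
  assumes "\<And>i j. 0 \<le> M $ i $ j" and "x \<le> y"
  shows "M *v x \<le> M *v y"
  using assms
  by (auto simp: less_eq_vec_def matrix_vector_mult_def intro!: sum_mono mult_left_mono)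

lemma nonneg_matrix_mult_nonneg:
  fixes M :: "'a::{ordered_semiring_0, semiring_1} ^ 'n::finite ^ 'm::finite"
    and N :: "'a ^ 'k::finite ^ 'n"
  assumes "\<And>i j. 0 \<le> M $ i $ j" and "\<And>i j. 0 \<le> N $ i $ j"
  shows "0 \<le> (M ** N) $ i $ j"
  using assms by (simp add: matrix_matrix_mult_def sum_nonneg mult_nonneg_nonneg)

lemma PiMat_nonneg: "0 \<le> PiMat g Q $ i $ j"
  by (simp add: PiMat_def unitv_def axis_def)

lemma Pmat_nonneg:
  assumes "\<And>s a s1. 0 \<le> P s a s1"
  shows "0 \<le> Pmat P $ i $ j"
  using assms by (simp add: Pmat_def)

lemma Dmat_nonneg:
  assumes "\<And>x. 0 \<le> d x"
  shows "0 \<le> Dmat d $ i $ j"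
  using assms by (simp add: Dmat_def)

lemma mat_1_minus_scaled_Dmat_nonneg:
  assumes "\<And>x. c * d x \<le> 1"
  shows "0 \<le> (mat 1 - c *\<^sub>R Dmat d) $ i $ j"
  using assms by (simp add: Dmat_def mat_def)

lemma PiMat_greedy_dominates:
  assumes "\<And>s b. Q $ (s, b) \<le> Q $ (s, g Q s)"
  shows "PiMat g Q' *v Q \<le> PiMat g Q *v Q"
  using assms by (simp add: less_eq_vec_def)

lemma sdq_update_eq_mean_plus_noise:
  "sdq_update g \<alpha> \<gamma> sa s' rr QA QB =
     QA + \<alpha> *\<^sub>R (Dmat d *v Rvec P r + \<gamma> *\<^sub>R ((Dmat d ** Pmat P ** PiMat g QB) *v QA) - Dmat d *v QA)
        + \<alpha> *\<^sub>R sdq_noise d P r g \<gamma> sa s' rr QA QB"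
  by (simp add: sdq_update_def sdq_noise_def algebra_simps)

lemma sdq_error_minus_lower_step:
  "sdq_update g \<alpha> \<gamma> sa s' rr A B - sdq_update g \<alpha> \<gamma> sa s' rr B A
   - ((mat 1 + (\<alpha> * \<gamma>) *\<^sub>R (Dmat d ** Pmat P ** PiMat g B) - \<alpha> *\<^sub>R Dmat d) *v L
      + \<alpha> *\<^sub>R sdq_noise d P r g \<gamma> sa s' rr A B - \<alpha> *\<^sub>R sdq_noise d P r g \<gamma> sa s' rr B A)
  = (mat 1 - \<alpha> *\<^sub>R Dmat d) *v (A - B - L)
    + (\<alpha> * \<gamma>) *\<^sub>R ((Dmat d ** Pmat P) *v (PiMat g B *v A - PiMat g A *v B - PiMat g B *v L))"
  unfolding sdq_update_eq_mean_plus_noise[where d = d and P = P and r = r]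
  by (simp add: algebra_simps matrix_vector_mul_assoc[symmetric]
      scaleR_matrix_vector_assoc[symmetric])

lemma sdq_lower_comparison_step:
  assumes P_nonneg: "\<And>s a s1. 0 \<le> P s a s1"
    and d_nonneg: "\<And>x. 0 \<le> d x"
    and \<alpha>d_le_1: "\<And>x. \<alpha> * d x \<le> 1"
    and "0 \<le> \<alpha>" "0 \<le> \<gamma>"
    and greedy: "\<And>Q s b. Q $ (s, b) \<le> Q $ (s, g Q s)"
    and below: "L \<le> A - B"
  shows "(mat 1 + (\<alpha> * \<gamma>) *\<^sub>R (Dmat d ** Pmat P ** PiMat g B) - \<alpha> *\<^sub>R Dmat d) *v L
      + \<alpha> *\<^sub>R sdq_noise d P r g \<gamma> sa s' rr A B - \<alpha> *\<^sub>R sdq_noise d P r g \<gamma> sa s' rr B A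
    \<le> sdq_update g \<alpha> \<gamma> sa s' rr A B - sdq_update g \<alpha> \<gamma> sa s' rr B A"
proof -
  have "PiMat g B *v L \<le> PiMat g B *v (A - B)"
    using below by (rule nonneg_matrix_mult_vec_mono[OF PiMat_nonneg])
  also have "\<dots> \<le> PiMat g B *v A - PiMat g A *v B"
    using PiMat_greedy_dominates[of B g A] greedy
    by (simp add: matrix_vector_mult_diff_distrib less_eq_vec_def)
  finally have "0 \<le> PiMat g B *v A - PiMat g A *v B - PiMat g B *v L"
    by (simp add: less_eq_vec_def)
  moreover have "0 \<le> (Dmat d ** Pmat P) $ i $ j" for i j
    using d_nonneg P_nonneg by (intro nonneg_matrix_mult_nonneg Dmat_nonneg Pmat_nonneg)
  ultimately have "0 \<le> (Dmat d ** Pmat P) *v (PiMat g B *v A - PiMat g A *v B - PiMat g B *v L)"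
    using nonneg_matrix_mult_vec_mono[of "Dmat d ** Pmat P" 0] by simp
  moreover have "0 \<le> (mat 1 - \<alpha> *\<^sub>R Dmat d) *v (A - B - L)"
    using nonneg_matrix_mult_vec_mono[OF mat_1_minus_scaled_Dmat_nonneg, of \<alpha> d 0] \<alpha>d_le_1 below
    by (simp add: less_eq_vec_def)
  ultimately have "0 \<le> (mat 1 - \<alpha> *\<^sub>R Dmat d) *v (A - B - L)
    + (\<alpha> * \<gamma>) *\<^sub>R ((Dmat d ** Pmat P) *v (PiMat g B *v A - PiMat g A *v B - PiMat g B *v L))"
    using \<open>0 \<le> \<alpha>\<close> \<open>0 \<le> \<gamma>\<close>
    by (auto simp: less_eq_vec_def intro!: add_nonneg_nonneg mult_nonneg_nonneg)
  then show ?thesis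
    unfolding sdq_error_minus_lower_step[symmetric, where sa = sa and s' = s' and rr = rr and r = r]
    by (simp add: less_eq_vec_def)
qed

theorem proposition5:
  fixes P :: "'s::finite \<Rightarrow> 'a::finite \<Rightarrow> 's \<Rightarrow> real"
    and r :: "'s \<Rightarrow> 'a \<Rightarrow> 's \<Rightarrow> real"
    and d :: "'s \<times> 'a \<Rightarrow> real"
    and \<alpha> \<gamma> :: real
    and greedy :: "real ^ ('s \<times> 'a) \<Rightarrow> 's \<Rightarrow> 'a"
    and sa :: "nat \<Rightarrow> 's \<times> 'a" and s' :: "nat \<Rightarrow> 's"
    and QA QB QL :: "nat \<Rightarrow> real ^ ('s \<times> 'a)"
  assumes P_nonneg: "\<And>s a s1. P s a s1 \<ge> 0"
    and P_sum: "\<And>s a. (\<Sum>s1\<in>UNIV. P s a s1) = 1"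
    and d_pos: "\<And>x. d x > 0"
    and d_sum: "(\<Sum>x\<in>UNIV. d x) = 1"
    and alpha: "0 < \<alpha>" "\<alpha> < 1"
    and gamma: "0 < \<gamma>" "\<gamma> < 1"
    and greedy: "\<And>Q s b. Q $ (s, b) \<le> Q $ (s, greedy Q s)"
    and QA_step: "\<And>k. QA (Suc k) =
        sdq_update greedy \<alpha> \<gamma> (sa k) (s' k) (r (fst (sa k)) (snd (sa k)) (s' k)) (QA k) (QB k)"
    and QB_step: "\<And>k. QB (Suc k) =
        sdq_update greedy \<alpha> \<gamma> (sa k) (s' k) (r (fst (sa k)) (snd (sa k)) (s' k)) (QB k) (QA k)"
    and QL_step: "\<And>k. QL (Suc k) =
        (mat 1 + (\<alpha> * \<gamma>) *\<^sub>R (Dmat d ** Pmat P ** PiMat greedy (QB k)) - \<alpha> *\<^sub>R Dmat d) *v QL k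
        + \<alpha> *\<^sub>R sdq_noise d P r greedy \<gamma> (sa k) (s' k) (r (fst (sa k)) (snd (sa k)) (s' k)) (QA k) (QB k)
        - \<alpha> *\<^sub>R sdq_noise d P r greedy \<gamma> (sa k) (s' k) (r (fst (sa k)) (snd (sa k)) (s' k)) (QB k) (QA k)"
    and init: "\<And>i. QL 0 $ i \<le> (QA 0 - QB 0) $ i"
  shows "\<forall>k i. QL k $ i \<le> (QA k - QB k) $ i"
proof -
  have \<alpha>d_le_1: "\<alpha> * d x \<le> 1" for x
  proof -
    have "d x \<le> 1"
      using member_le_sum[of x UNIV d] d_pos d_sum by (simp add: less_imp_le)
    then show ?thesis
      using alpha d_pos[of x] by (simp add: mult_le_one)
  qed
  have "QL k \<le> QA k - QB k" for k
  proof (induction k)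
    case 0
    show ?case using init by (simp add: less_eq_vec_def)
  next
    case (Suc k)
    show ?case
      unfolding QA_step QB_step QL_step
      using d_pos alpha gamma
      by (intro sdq_lower_comparison_step[OF P_nonneg _ \<alpha>d_le_1 _ _ greedy Suc.IH])
        (auto simp: less_imp_le)
  qed
  then show ?thesis by (simp add: less_eq_vec_def)
qed

end
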